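(* Let $\kappa,\lambda$ be infinite cardinals, $\alpha\leq\kappa^+$ an uncountable cardinal and $\beta\leq\lambda^+$ an infinite cardinal. If there is an injective group homomorphism $j:P(\kappa,\alpha)\to P(\lambda,\beta)$, then, writing $j_\nu=p_\nu\circ j$ for $\nu\in\lambda$ (where $p_\nu$ is the $\nu$-th coordinate projection) and $F_\nu=\{\xi\in\kappa:j_\nu(e_\xi)\neq0\}$, each $F_\nu$ is finite and $\kappa\leq|\{\nu\in\lambda:F_\nu\neq\varnothing\}|$; in particular $\kappa\leq\lambda$.
   Context: $\mathbb{Z}^\kappa$ is the group of functions $x:\kappa\to\mathbb{Z}$ under pointwise addition, $\mathrm{supp}(x)=\{\xi\in\kappa:x(\xi)\neq0\}$, and $P(\kappa,\alpha)=\{x\in\mathbb{Z}^\kappa:|\mathrm{supp}(x)|<\alpha\}$. For $\xi\in\kappa$, $e_\xi$ is the function with $e_\xi(\xi)=1$ and $e_\xi(\eta)=0$ for $\eta\neq\xi$. For $\nu\in\lambda$, $p_\nu:P(\lambda,\beta)\to\mathbb{Z}$ is $p_\nu(y)=y(\nu)$. *)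

theory Defs
  imports Main
begin

text \<open>Elements of Z^K are modelled as functions x :: 'a => int vanishing outside K.
Cardinals alpha, beta are cardinal-order relations (Card_order), compared via ordLess / ordLeq.\<close>

definition supp :: "('a \<Rightarrow> int) \<Rightarrow> 'a set" where
  "supp x = {\<xi>. x \<xi> \<noteq> 0}"

definition Pgrp :: "'a set \<Rightarrow> 'c rel \<Rightarrow> ('a \<Rightarrow> int) set" where
  "Pgrp K \<alpha> = {x. (\<forall>\<xi>. \<xi> \<notin> K \<longrightarrow> x \<xi> = 0) \<and> (card_of (supp x), \<alpha>) \<in> ordLess}"

definition unitvec :: "'a \<Rightarrow> 'a \<Rightarrow> int" where
  "unitvec \<xi> = (\<lambda>\<eta>. if \<eta> = \<xi> then 1 else 0)"

end

theory Submission imports Defs "HOL-Library.Countable_Set_Type" begin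

text \<open>
  The heart of the matter is that \<open>\<int>\<close> is slender: an additive map \<open>H : \<int>\<^sup>\<nat> \<rightarrow> \<int>\<close> kills
  some unit vector. Otherwise, with weights \<open>a\<^sub>n = \<Prod>k<n. (\<bar>H e\<^sub>k\<bar> + 1)\<close>, the values of \<open>H\<close> on the
  vectors \<open>\<Sum>n\<in>A. a\<^sub>n e\<^sub>n\<close> would separate all sets \<open>A \<subseteq> \<nat>\<close>, uncountably many, inside \<open>\<int>\<close>.
  Since \<open>\<alpha>\<close> is uncountable, \<open>P(\<kappa>,\<alpha>)\<close> contains a copy of \<open>\<int>\<^sup>\<nat>\<close> along any countable set of
  coordinates, so each \<open>F\<^sub>\<nu>\<close> must be finite. Injectivity of \<open>j\<close> puts every \<open>\<xi> \<in> \<kappa>\<close> into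
  some \<open>F\<^sub>\<nu>\<close>, and an infinite set covered by finitely-sized pieces has no more elements than
  there are pieces.
\<close>

unbundle cardinal_syntax

lemma additive_int_mult:
  fixes H :: "('i \<Rightarrow> int) \<Rightarrow> int"
  assumes add: "\<And>c d. H (\<lambda>n. c n + d n) = H c + H d"
  shows "H (\<lambda>n. k * c n) = k * H c"
proof (induction k rule: int_induct[where k = 0])
  case base
  show ?case using add[of "\<lambda>_. 0" "\<lambda>_. 0"] by simp
next
  case (step1 i)
  have "(\<lambda>n. (i + 1) * c n) = (\<lambda>n. i * c n + c n)"
    by (simp add: algebra_simps)
  then have "H (\<lambda>n. (i + 1) * c n) = H (\<lambda>n. i * c n) + H c"
    by (simp only: add)
  then show ?case using step1.IH by (simp add: algebra_simps)
next
  case (step2 i)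
  have "(\<lambda>n. i * c n) = (\<lambda>n. (i - 1) * c n + c n)"
    by (simp add: algebra_simps)
  then have "H (\<lambda>n. i * c n) = H (\<lambda>n. (i - 1) * c n) + H c"
    by (simp only: add)
  then show ?case using step2.IH by (simp add: algebra_simps)
qed

lemma additive_int_nonzero_at_leading_term:
  fixes H :: "(nat \<Rightarrow> int) \<Rightarrow> int"
  assumes add: "\<And>c d. H (\<lambda>n. c n + d n) = H c + H d"
    and Hm: "H (unitvec m) \<noteq> 0"
    and below: "\<And>n. n < m \<Longrightarrow> d n = 0"
    and lead: "\<bar>d m\<bar> = w" "w > 0"
    and above: "\<And>n. m < n \<Longrightarrow> w * (\<bar>H (unitvec m)\<bar> + 1) dvd d n"
  shows "H d \<noteq> 0"
proof
  assume Hd: "H d = 0"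
  define q where "q = w * (\<bar>H (unitvec m)\<bar> + 1)"
  define e where "e n = (if m < n then d n div q else 0)" for n
  have decomp: "d = (\<lambda>n. d m * unitvec m n + q * e n)"
  proof
    fix n
    show "d n = d m * unitvec m n + q * e n"
      using below[of n] above[of n] by (cases n m rule: linorder_cases) (auto simp: unitvec_def e_def q_def)
  qed
  have "H d = H (\<lambda>n. d m * unitvec m n) + H (\<lambda>n. q * e n)"
    by (subst decomp) (rule add)
  also have "\<dots> = d m * H (unitvec m) + q * H e"
    by (simp only: additive_int_mult[of H, OF add])
  finally have "d m * H (unitvec m) = q * - H e"
    using Hd by simp
  then have "q dvd d m * H (unitvec m)" ..
  moreover have "d m * H (unitvec m) \<noteq> 0"
    using Hm lead by auto
  ultimately have "\<bar>q\<bar> \<le> \<bar>d m * H (unitvec m)\<bar>"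
    by (simp add: dvd_imp_le_int)
  then show False
    using lead by (simp add: q_def abs_mult algebra_simps)
qed

lemma no_inj_nat_set_to_int: "\<not> inj (g :: nat set \<Rightarrow> int)"
proof
  assume "inj g"
  then have "inj (to_nat \<circ> g)" by (simp add: inj_compose)
  then have "surj (inv (to_nat \<circ> g))" by (rule inj_imp_surj_inv)
  then show False using Cantors_theorem[of "UNIV :: nat set"] by auto
qed

theorem additive_int_seq_kills_unitvec:
  fixes H :: "(nat \<Rightarrow> int) \<Rightarrow> int"
  assumes add: "\<And>c d. H (\<lambda>n. c n + d n) = H c + H d"
  shows "\<exists>n. H (unitvec n) = 0"
proof (rule ccontr)
  assume "\<nexists>n. H (unitvec n) = 0"
  then have nz: "H (unitvec n) \<noteq> 0" for n by blast
  define a where "a n = (\<Prod>k<n. \<bar>H (unitvec k)\<bar> + 1)" for n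
  have a_pos: "a n > 0" for n unfolding a_def by (simp add: prod_pos)
  have a_dvd: "a m dvd a n" if "m \<le> n" for m n
    unfolding a_def using that by (simp add: prod_dvd_prod_subset)
  have a_Suc: "a (Suc n) = a n * (\<bar>H (unitvec n)\<bar> + 1)" for n
    unfolding a_def by simp
  define X where "X A n = (if n \<in> A then a n else 0)" for A n
  have "inj (\<lambda>A. H (X A))"
  proof (rule injI, rule ccontr)
    fix A B assume eq: "H (X A) = H (X B)" and "A \<noteq> B"
    then have ex: "\<exists>n. (n \<in> A) \<noteq> (n \<in> B)" by blast
    define m where "m = (LEAST n. (n \<in> A) \<noteq> (n \<in> B))"
    have m: "(m \<in> A) \<noteq> (m \<in> B)"
      unfolding m_def by (rule LeastI_ex[OF ex])
    have least: "(n \<in> A) = (n \<in> B)" if "n < m" for n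
      using not_less_Least[OF that[unfolded m_def]] by blast
    define d where "d n = X A n + - X B n" for n
    have "H d = H (X A) + H (\<lambda>n. - X B n)"
      unfolding d_def by (rule add)
    also have "\<dots> = 0"
      using eq additive_int_mult[of H, OF add, where k = "-1" and c = "X B"] by simp
    finally have "H d = 0" .
    moreover have "H d \<noteq> 0"
    proof (rule additive_int_nonzero_at_leading_term[of H, OF add nz])
      show "d n = 0" if "n < m" for n using least[OF that] by (simp add: d_def X_def)
      show "\<bar>d m\<bar> = a m" using m a_pos[of m] by (auto simp: d_def X_def)
      show "a m * (\<bar>H (unitvec m)\<bar> + 1) dvd d n" if "m < n" for n
        using a_dvd[of "Suc m" n] that unfolding a_Suc d_def X_def by simp
    qed (rule a_pos)
    ultimately show False by contradiction
  qed
  then show False using no_inj_nat_set_to_int by blast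
qed

lemma countable_supp_in_Pgrp:
  assumes "natLeq <o \<alpha>" "countable (supp x)" "\<And>\<xi>. \<xi> \<notin> K \<Longrightarrow> x \<xi> = 0"
  shows "x \<in> Pgrp K \<alpha>"
proof -
  have "|supp x| \<le>o natLeq" using assms(2) countable_card_le_natLeq by blast
  then have "|supp x| <o \<alpha>" using assms(1) ordLeq_ordLess_trans by blast
  then show ?thesis using assms(3) unfolding Pgrp_def by blast
qed

lemma zero_in_Pgrp: "natLeq <o \<alpha> \<Longrightarrow> (\<lambda>_. 0) \<in> Pgrp K \<alpha>"
  by (rule countable_supp_in_Pgrp) (simp_all add: supp_def)

lemma unitvec_in_Pgrp:
  assumes "natLeq <o \<alpha>" "\<xi> \<in> K"
  shows "unitvec \<xi> \<in> Pgrp K \<alpha>"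
proof (rule countable_supp_in_Pgrp[OF assms(1)])
  have "supp (unitvec \<xi>) = {\<xi>}" by (auto simp: supp_def unitvec_def)
  then show "countable (supp (unitvec \<xi>))" by simp
  show "unitvec \<xi> \<eta> = 0" if "\<eta> \<notin> K" for \<eta> using assms(2) that by (auto simp: unitvec_def)
qed

lemma Pgrp_hom_coordinate_finite:
  fixes j :: "('a \<Rightarrow> int) \<Rightarrow> 'b \<Rightarrow> int"
  assumes \<alpha>: "natLeq <o \<alpha>"
    and hom: "\<And>x y. x \<in> Pgrp K \<alpha> \<Longrightarrow> y \<in> Pgrp K \<alpha> \<Longrightarrow> j (\<lambda>\<xi>. x \<xi> + y \<xi>) = (\<lambda>\<nu>. j x \<nu> + j y \<nu>)"
  shows "finite {\<xi>\<in>K. j (unitvec \<xi>) \<nu> \<noteq> 0}"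
proof (rule ccontr)
  assume "infinite {\<xi>\<in>K. j (unitvec \<xi>) \<nu> \<noteq> 0}"
  then obtain f :: "nat \<Rightarrow> _" where f: "inj f" "range f \<subseteq> {\<xi>\<in>K. j (unitvec \<xi>) \<nu> \<noteq> 0}"
    using infinite_countable_subset by blast
  define embed where "embed c \<eta> = (if \<eta> \<in> range f then c (inv f \<eta>) else 0)" for c :: "nat \<Rightarrow> int" and \<eta>
  have embed_Pgrp: "embed c \<in> Pgrp K \<alpha>" for c
  proof (rule countable_supp_in_Pgrp[OF \<alpha>])
    have "supp (embed c) \<subseteq> range f" unfolding supp_def embed_def by auto
    then show "countable (supp (embed c))" by (rule countable_subset) simp
    show "embed c \<eta> = 0" if "\<eta> \<notin> K" for \<eta> using f(2) that unfolding embed_def by auto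
  qed
  have "embed (\<lambda>n. c n + d n) = (\<lambda>\<eta>. embed c \<eta> + embed d \<eta>)" for c d
    by (auto simp: embed_def)
  then have "j (embed (\<lambda>n. c n + d n)) \<nu> = j (embed c) \<nu> + j (embed d) \<nu>" for c d
    by (simp add: hom[OF embed_Pgrp embed_Pgrp])
  then obtain n where "j (embed (unitvec n)) \<nu> = 0"
    using additive_int_seq_kills_unitvec[of "\<lambda>c. j (embed c) \<nu>"] by blast
  moreover have "embed (unitvec n) = unitvec (f n)"
  proof
    show "embed (unitvec n) \<eta> = unitvec (f n) \<eta>" for \<eta>
      using f(1) by (cases "\<eta> \<in> range f") (auto simp: embed_def unitvec_def inj_eq)
  qed
  ultimately show False using f(2) by auto
qed

lemma inj_hom_unitvec_nonzero:
  fixes j :: "('a \<Rightarrow> int) \<Rightarrow> 'b \<Rightarrow> int"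
  assumes \<alpha>: "natLeq <o \<alpha>" and \<xi>: "\<xi> \<in> K"
    and hom: "\<And>x y. x \<in> Pgrp K \<alpha> \<Longrightarrow> y \<in> Pgrp K \<alpha> \<Longrightarrow> j (\<lambda>\<xi>. x \<xi> + y \<xi>) = (\<lambda>\<nu>. j x \<nu> + j y \<nu>)"
    and inj: "inj_on j (Pgrp K \<alpha>)"
  shows "j (unitvec \<xi>) \<noteq> (\<lambda>_. 0)"
proof
  have zero: "(\<lambda>_. 0) \<in> Pgrp K \<alpha>"
    using \<alpha> by (rule zero_in_Pgrp)
  have "j (\<lambda>_. 0) \<nu> = j (\<lambda>_. 0) \<nu> + j (\<lambda>_. 0) \<nu>" for \<nu>
    using fun_cong[OF hom[OF zero zero], of \<nu>] by simp
  then have j_zero: "j (\<lambda>_. 0) = (\<lambda>_. 0)"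
    by (simp add: fun_eq_iff)
  assume "j (unitvec \<xi>) = (\<lambda>_. 0)"
  then have "unitvec \<xi> = (\<lambda>_. 0)"
    using inj_onD[OF inj _ unitvec_in_Pgrp[OF \<alpha> \<xi>] zero] j_zero by simp
  then have "unitvec \<xi> \<xi> = 0" by simp
  then show False by (simp add: unitvec_def)
qed

lemma card_of_ordLeq_finite_cover:
  assumes "infinite K" "K \<subseteq> (\<Union>i\<in>I. F i)" "\<And>i. i \<in> I \<Longrightarrow> finite (F i)"
  shows "|K| \<le>o |I|"
proof -
  have "infinite I"
    using assms finite_subset by blast
  have "|F i| \<le>o |I|" if "i \<in> I" for i
    using assms(3)[OF that] \<open>infinite I\<close>
    by (intro ordLess_imp_ordLeq finite_ordLess_infinite card_of_Well_order) (simp_all add: Field_card_of)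
  then have "|\<Union>i\<in>I. F i| \<le>o |I|"
    by (intro card_of_UNION_ordLeq_infinite \<open>infinite I\<close> ordLeq_refl card_of_Card_order) blast
  then show ?thesis using card_of_mono1[OF assms(2)] ordLeq_transitive by blast
qed

theorem mainTheorem9:
  fixes K :: "'a set" and L :: "'b set" and \<alpha> :: "'c rel" and \<beta> :: "'d rel"
    and j :: "('a \<Rightarrow> int) \<Rightarrow> ('b \<Rightarrow> int)"
  assumes "infinite K" and "infinite L"
    and "Card_order \<alpha>" and "(\<alpha>, cardSuc (card_of K)) \<in> ordLeq" and "(natLeq, \<alpha>) \<in> ordLess"
    and "Card_order \<beta>" and "(\<beta>, cardSuc (card_of L)) \<in> ordLeq" and "(natLeq, \<beta>) \<in> ordLeq"
    and "j ` Pgrp K \<alpha> \<subseteq> Pgrp L \<beta>"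
    and "\<And>x y. x \<in> Pgrp K \<alpha> \<Longrightarrow> y \<in> Pgrp K \<alpha> \<Longrightarrow> j (\<lambda>\<xi>. x \<xi> + y \<xi>) = (\<lambda>\<nu>. j x \<nu> + j y \<nu>)"
    and "inj_on j (Pgrp K \<alpha>)"
  shows "(\<forall>\<nu>\<in>L. finite {\<xi>\<in>K. j (unitvec \<xi>) \<nu> \<noteq> 0})
       \<and> (card_of K, card_of {\<nu>\<in>L. {\<xi>\<in>K. j (unitvec \<xi>) \<nu> \<noteq> 0} \<noteq> {}}) \<in> ordLeq
       \<and> (card_of K, card_of L) \<in> ordLeq"
proof -
  define F where "F \<nu> = {\<xi>\<in>K. j (unitvec \<xi>) \<nu> \<noteq> 0}" for \<nu>
  define N where "N = {\<nu>\<in>L. F \<nu> \<noteq> {}}"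
  have F_finite: "finite (F \<nu>)" for \<nu>
    unfolding F_def by (rule Pgrp_hom_coordinate_finite[where j = j and K = K, OF assms(5,10)])
  have "K \<subseteq> (\<Union>\<nu>\<in>N. F \<nu>)"
  proof
    fix \<xi> assume "\<xi> \<in> K"
    then obtain \<nu> where \<nu>: "j (unitvec \<xi>) \<nu> \<noteq> 0"
      using inj_hom_unitvec_nonzero[OF assms(5) _ assms(10,11)] by blast
    have "j (unitvec \<xi>) \<in> Pgrp L \<beta>"
      using assms(9) unitvec_in_Pgrp[OF assms(5) \<open>\<xi> \<in> K\<close>] by blast
    then have "\<nu> \<in> L" using \<nu> unfolding Pgrp_def by blast
    then show "\<xi> \<in> (\<Union>\<nu>\<in>N. F \<nu>)" using \<open>\<xi> \<in> K\<close> \<nu> unfolding N_def F_def by blast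
  qed
  then have KN: "|K| \<le>o |N|"
    using card_of_ordLeq_finite_cover[OF assms(1)] F_finite by blast
  moreover have "|N| \<le>o |L|"
    unfolding N_def by (rule card_of_mono1) blast
  ultimately have "|K| \<le>o |L|" using ordLeq_transitive by blast
  then show ?thesis using F_finite KN unfolding F_def N_def by blast
qed

end
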